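(* Let $K\ge1$, $T\ge1$ and let $\ell_1,\dots,\ell_T\in[0,1]^K$. Then the regret of AdaHedge satisfies \[ \mathcal{R}^{\mathrm{ah}}_T\le 2\sqrt{V^{\mathrm{ah}}_T\ln K}+\tfrac43\ln K+2. \]
   Context: Hedge setting: $K$ experts; in round $t$ the learner chooses a probability vector $w_t$, then $\ell_t$ is revealed and the learner suffers $h_t=\sum_kw_{t,k}\ell_{t,k}$. Write $L_{t,k}=\sum_{s=1}^t\ell_{s,k}$ ($L_{0,k}=0$), $L^*_t=\min_kL_{t,k}$, $H_T=\sum_{t\le T}h_t$, regret $\mathcal{R}_T=H_T-L^*_T$. Exponential weights with learning rate $\eta\in(0,\infty]$ at time $t$: $w_{t,k}=e^{-\eta L_{t-1,k}}/\sum_je^{-\eta L_{t-1,j}}$ if $\eta<\infty$; for $\eta=\infty$, $w_t$ is uniform on $\{k:L_{t-1,k}=L^*_{t-1}\}$. With learning rate $\eta_t$ in round $t$: mix loss $m_t=-\frac1{\eta_t}\ln\sum_kw_{t,k}e^{-\eta_t\ell_{t,k}}$ if $\eta_t<\infty$, $m_t=L^*_t-L^*_{t-1}$ if $\eta_t=\infty$; mixability gap $\delta_t=h_t-m_t$; loss variance $v_t=\sum_kw_{t,k}(\ell_{t,k}-h_t)^2$. AdaHedge: $\Delta^{\mathrm{ah}}_0=0$; in round $t$, $\eta^{\mathrm{ah}}_t=\ln K/\Delta^{\mathrm{ah}}_{t-1}$ ($=\infty$ if $\Delta^{\mathrm{ah}}_{t-1}=0$), weights are exponential weights with learning rate $\eta^{\mathrm{ah}}_t$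 from $L_{t-1}$, and $\Delta^{\mathrm{ah}}_t=\Delta^{\mathrm{ah}}_{t-1}+\delta^{\mathrm{ah}}_t$. $V^{\mathrm{ah}}_T=\sum_{t=1}^Tv^{\mathrm{ah}}_t$ is the cumulative loss variance of AdaHedge's weights and $\mathcal{R}^{\mathrm{ah}}_T$ its regret. *)

theory Defs
  imports Complex_Main "HOL-Library.Extended_Real"
begin

text \<open>Experts are indexed by 0..K-1; the loss vector of round t (t \<ge> 1) is
  the function l t :: nat \<Rightarrow> real (values at k < K are relevant).
  A learning rate is an extended real, PInfty standing for eta = infinity.\<close>

definition cumL :: "(nat \<Rightarrow> nat \<Rightarrow> real) \<Rightarrow> nat \<Rightarrow> nat \<Rightarrow> real" where
  "cumL l t k = (\<Sum>s\<in>{1..t}. l s k)"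

definition Lstar :: "nat \<Rightarrow> (nat \<Rightarrow> nat \<Rightarrow> real) \<Rightarrow> nat \<Rightarrow> real" where
  "Lstar K l t = Min ((cumL l t) ` {..<K})"

definition exp_weights :: "nat \<Rightarrow> ereal \<Rightarrow> (nat \<Rightarrow> real) \<Rightarrow> nat \<Rightarrow> real" where
  "exp_weights K eta Lv k =
     (if eta = PInfty then
        (let m = Min (Lv ` {..<K}) in
         if Lv k = m then 1 / real (card {j\<in>{..<K}. Lv j = m}) else 0)
      else exp (- real_of_ereal eta * Lv k) /
             (\<Sum>j<K. exp (- real_of_ereal eta * Lv j)))"

definition hedge_loss :: "nat \<Rightarrow> (nat \<Rightarrow> real) \<Rightarrow> (nat \<Rightarrow> real) \<Rightarrow> real" where
  "hedge_loss K w lv = (\<Sum>k<K. w k * lv k)"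

definition mix_loss :: "nat \<Rightarrow> (nat \<Rightarrow> nat \<Rightarrow> real) \<Rightarrow> nat \<Rightarrow> ereal \<Rightarrow> (nat \<Rightarrow> real) \<Rightarrow> real" where
  "mix_loss K l t eta w =
     (if eta = PInfty then Lstar K l t - Lstar K l (t - 1)
      else - (1 / real_of_ereal eta) *
             ln (\<Sum>k<K. w k * exp (- real_of_ereal eta * l t k)))"

definition ah_eta :: "nat \<Rightarrow> real \<Rightarrow> ereal" where
  "ah_eta K D = (if D = 0 then PInfty else ereal (ln (real K) / D))"

definition ah_gap :: "nat \<Rightarrow> (nat \<Rightarrow> nat \<Rightarrow> real) \<Rightarrow> nat \<Rightarrow> real \<Rightarrow> real" where
  "ah_gap K l t D =
     (let eta = ah_eta K D; w = exp_weights K eta (cumL l (t - 1))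
      in hedge_loss K w (l t) - mix_loss K l t eta w)"

primrec ah_Delta :: "nat \<Rightarrow> (nat \<Rightarrow> nat \<Rightarrow> real) \<Rightarrow> nat \<Rightarrow> real" where
  "ah_Delta K l 0 = 0"
| "ah_Delta K l (Suc t) = ah_Delta K l t + ah_gap K l (Suc t) (ah_Delta K l t)"

definition ah_weights :: "nat \<Rightarrow> (nat \<Rightarrow> nat \<Rightarrow> real) \<Rightarrow> nat \<Rightarrow> nat \<Rightarrow> real" where
  "ah_weights K l t = exp_weights K (ah_eta K (ah_Delta K l (t - 1))) (cumL l (t - 1))"

definition ah_h :: "nat \<Rightarrow> (nat \<Rightarrow> nat \<Rightarrow> real) \<Rightarrow> nat \<Rightarrow> real" where
  "ah_h K l t = hedge_loss K (ah_weights K l t) (l t)"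

definition ah_regret :: "nat \<Rightarrow> (nat \<Rightarrow> nat \<Rightarrow> real) \<Rightarrow> nat \<Rightarrow> real" where
  "ah_regret K l T = (\<Sum>t\<in>{1..T}. ah_h K l t) - Lstar K l T"

definition ah_var :: "nat \<Rightarrow> (nat \<Rightarrow> nat \<Rightarrow> real) \<Rightarrow> nat \<Rightarrow> real" where
  "ah_var K l T = (\<Sum>t\<in>{1..T}. \<Sum>k<K. ah_weights K l t k * (l t k - ah_h K l t)^2)"

end

theory Submission
  imports Defs "HOL-Analysis.Convex"
begin

text \<open>AdaHedge's regret is at most twice its cumulative mixability gap Delta(T): the mix losses
  telescope to a potential which, since the learning rate only decreases, stays below
  L*(T) + ln K / eta(T) = L*(T) + Delta(T-1). Each gap delta(t) lies in [0,1], and Bernstein's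
  bound on the exponential gives delta(t) \<le> eta(t) v(t) / 2 + eta(t) delta(t) / 3, i.e.
  Delta(t-1) delta(t) \<le> (ln K / 2) v(t) + (ln K / 3) delta(t) because eta(t) = ln K / Delta(t-1).
  Summing Delta(t)^2 - Delta(t-1)^2 = 2 Delta(t-1) delta(t) + delta(t)^2 yields
  Delta(T)^2 \<le> V ln K + (2/3 ln K + 1) Delta(T), a quadratic inequality that bounds Delta(T).\<close>

lemma exp_mult_le_chord:
  fixes p y :: real
  assumes "0 \<le> p" "p \<le> 1"
  shows "exp (p * y) \<le> 1 + p * (exp y - 1)"
proof -
  have "exp ((1 - p) *\<^sub>R 0 + p *\<^sub>R y) \<le> (1 - p) * exp 0 + p * exp y"
    by (rule convex_onD[OF exp_convex]) (use assms in auto)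
  then show ?thesis by (simp add: algebra_simps)
qed

lemma exp_le_quadratic_of_nonpos:
  fixes x :: real
  assumes "x \<le> 0"
  shows "exp x \<le> 1 + x + x\<^sup>2 / 2"
proof -
  let ?g = "\<lambda>y::real. exp y - 1 - y - y\<^sup>2 / 2"
  have "?g x \<le> ?g 0"
  proof (rule DERIV_nonneg_imp_nondecreasing[OF assms])
    fix y :: real
    show "\<exists>d. DERIV ?g y :> d \<and> d \<ge> 0"
      by (rule exI[of _ "exp y - 1 - y"]) (auto intro!: derivative_eq_intros simp: algebra_simps)
  qed
  then show ?thesis by simp
qed

lemma two_mult_three_power_le_fact: "2 * 3 ^ n \<le> (fact (n + 2) :: real)"
proof (induction n)
  case 0
  then show ?case by (simp add: numeral_2_eq_2)
next
  case (Suc n)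
  have "(2::real) * 3 ^ Suc n = 3 * (2 * 3 ^ n)"
    by simp
  also have "\<dots> \<le> 3 * fact (n + 2)"
    using Suc.IH by linarith
  also have "\<dots> \<le> real (Suc n + 2) * fact (n + 2)"
    by (rule mult_right_mono) auto
  also have "\<dots> = fact (Suc n + 2)"
    by (metis add_Suc fact_Suc of_nat_fact)
  finally show ?case .
qed

text \<open>Comparing the exponential series termwise with a geometric series of ratio x/3.\<close>
lemma exp_le_Bernstein_of_nonneg:
  fixes x :: real
  assumes "0 \<le> x" "x < 3"
  shows "exp x \<le> 1 + x + x\<^sup>2 / (2 * (1 - x / 3))"
proof -
  have exp_tail: "(\<lambda>n. x ^ (n + 2) / fact (n + 2)) sums (exp x - (1 + x))"
    using sums_split_initial_segment[OF exp_converges[of x], of 2]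
    by (simp add: numeral_2_eq_2 divide_inverse ac_simps)
  have geometric: "(\<lambda>n. x\<^sup>2 / 2 * (x / 3) ^ n) sums (x\<^sup>2 / 2 * (1 / (1 - x / 3)))"
    by (rule sums_mult, rule geometric_sums) (use assms in auto)
  have "exp x - (1 + x) \<le> x\<^sup>2 / 2 * (1 / (1 - x / 3))"
  proof (rule sums_le[OF _ exp_tail geometric])
    fix n
    have "x ^ (n + 2) * (2 * 3 ^ n) \<le> x ^ (n + 2) * fact (n + 2)"
      by (rule mult_left_mono[OF two_mult_three_power_le_fact]) (use assms in auto)
    then have "x ^ (n + 2) / fact (n + 2) \<le> x ^ (n + 2) / (2 * 3 ^ n)"
      using fact_gt_zero[where 'a=real, of "n + 2"] by (simp add: field_simps)
    also have "\<dots> = x\<^sup>2 / 2 * (x / 3) ^ n"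
      by (simp add: power_add power_divide power2_eq_square)
    finally show "x ^ (n + 2) / fact (n + 2) \<le> x\<^sup>2 / 2 * (x / 3) ^ n" .
  qed
  then show ?thesis by (simp add: field_simps)
qed

lemma exp_le_Bernstein:
  fixes x c :: real
  assumes "x \<le> c" "0 \<le> c" "c < 3"
  shows "exp x \<le> 1 + x + x\<^sup>2 / (2 * (1 - c / 3))"
proof (cases "x \<le> 0")
  case True
  have "x\<^sup>2 / 2 \<le> x\<^sup>2 / (2 * (1 - c / 3))"
    using assms by (intro divide_left_mono) (auto simp: field_simps)
  then show ?thesis using exp_le_quadratic_of_nonpos[OF True] by linarith
next
  case False
  have "x\<^sup>2 / (2 * (1 - x / 3)) \<le> x\<^sup>2 / (2 * (1 - c / 3))"
  proof (rule divide_left_mono)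
    show "2 * (1 - c / 3) \<le> 2 * (1 - x / 3)" using assms(1) by simp
    show "0 < 2 * (1 - x / 3) * (2 * (1 - c / 3))" using assms by (intro mult_pos_pos) auto
  qed simp
  then show ?thesis using exp_le_Bernstein_of_nonneg[of x] False assms by simp
qed

lemma le_sqrt_add_of_quadratic:
  fixes x A b :: real
  assumes "0 \<le> A" "0 \<le> b" "x\<^sup>2 \<le> A + b * x"
  shows "x \<le> sqrt A + b"
proof (cases "x \<le> b")
  case True
  then show ?thesis using assms(1) by (simp add: add_increasing)
next
  case False
  have "(x - b)\<^sup>2 \<le> x * (x - b)"
    using False assms(2) by (simp add: power2_eq_square mult_right_mono)
  also have "\<dots> \<le> A"
    using assms(3) by (simp add: power2_eq_square algebra_simps)
  finally have "x - b \<le> sqrt A"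
    using False by (simp add: real_le_rsqrt)
  then show ?thesis by simp
qed

lemma ln_le_of_le_exp: "0 < (x::real) \<Longrightarrow> x \<le> exp y \<Longrightarrow> ln x \<le> y"
  using ln_le_cancel_iff[of x "exp y"] by simp

definition loss_variance :: "nat \<Rightarrow> (nat \<Rightarrow> real) \<Rightarrow> (nat \<Rightarrow> real) \<Rightarrow> real" where
  "loss_variance K w lv = (\<Sum>k<K. w k * (lv k - hedge_loss K w lv)\<^sup>2)"

locale loss_round =
  fixes K :: nat and w lv :: "nat \<Rightarrow> real"
  assumes weights_nonneg: "\<And>k. k < K \<Longrightarrow> 0 \<le> w k"
    and sum_weights: "(\<Sum>k<K. w k) = 1"
    and losses_unit: "\<And>k. k < K \<Longrightarrow> 0 \<le> lv k \<and> lv k \<le> 1"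
begin

abbreviation h :: real where
  "h \<equiv> hedge_loss K w lv"

text \<open>h minus the mix loss at the finite learning rate e.\<close>
definition mix_gap :: "real \<Rightarrow> real" where
  "mix_gap e = h + ln (\<Sum>k<K. w k * exp (- e * lv k)) / e"

lemma hedge_loss_le_one: "h \<le> 1"
proof -
  have "h \<le> (\<Sum>k<K. w k * 1)"
    unfolding hedge_loss_def using weights_nonneg losses_unit by (intro sum_mono mult_left_mono) auto
  then show ?thesis using sum_weights by simp
qed

lemma loss_variance_nonneg: "0 \<le> loss_variance K w lv"
  unfolding loss_variance_def using weights_nonneg by (intro sum_nonneg) auto

lemma sum_weights_linear: "(\<Sum>k<K. w k * (1 + e * (h - lv k))) = 1"
  by (simp add: algebra_simps sum.distrib sum_subtractf sum_weights hedge_loss_def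
      sum_distrib_left[symmetric] flip: sum_distrib_right)

lemma one_le_sum_exp_centred: "1 \<le> (\<Sum>k<K. w k * exp (e * (h - lv k)))"
proof -
  have "(\<Sum>k<K. w k * (1 + e * (h - lv k))) \<le> (\<Sum>k<K. w k * exp (e * (h - lv k)))"
    using weights_nonneg by (intro sum_mono mult_left_mono) auto
  then show ?thesis by (simp only: sum_weights_linear)
qed

lemma sum_exp_factor:
  "(\<Sum>k<K. w k * exp (- e * lv k)) = exp (- e * h) * (\<Sum>k<K. w k * exp (e * (h - lv k)))"
  by (simp add: sum_distrib_left algebra_simps exp_add[symmetric])

lemma sum_exp_pos: "0 < (\<Sum>k<K. w k * exp (- e * lv k))"
  unfolding sum_exp_factor using one_le_sum_exp_centred[of e] by simp

lemma mix_gap_eq: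
  assumes "e \<noteq> 0"
  shows "mix_gap e = ln (\<Sum>k<K. w k * exp (e * (h - lv k))) / e"
proof -
  have "0 < (\<Sum>k<K. w k * exp (e * (h - lv k)))"
    using one_le_sum_exp_centred[of e] by linarith
  then have "ln (\<Sum>k<K. w k * exp (- e * lv k)) = - e * h + ln (\<Sum>k<K. w k * exp (e * (h - lv k)))"
    unfolding sum_exp_factor by (simp add: ln_mult)
  then show ?thesis
    unfolding mix_gap_def using assms by (simp add: field_simps)
qed

lemma mix_gap_nonneg: "0 < e \<Longrightarrow> 0 \<le> mix_gap e"
  using mix_gap_eq[of e] one_le_sum_exp_centred[of e] by simp

lemma mix_gap_le_one:
  assumes "0 < e"
  shows "mix_gap e \<le> 1"
proof -
  have "(\<Sum>k<K. w k * exp (- e * lv k)) \<le> (\<Sum>k<K. w k * 1)"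
    using weights_nonneg losses_unit assms by (intro sum_mono mult_left_mono) auto
  then have "ln (\<Sum>k<K. w k * exp (- e * lv k)) / e \<le> 0"
    using sum_exp_pos[of e] sum_weights assms by (simp add: divide_nonpos_pos)
  then show ?thesis
    unfolding mix_gap_def using hedge_loss_le_one by linarith
qed

text \<open>Bernstein's bound on the mixability gap, written so that it also holds (trivially) for e \<ge> 3.\<close>
lemma mix_gap_Bernstein:
  assumes e: "0 < e"
  shows "mix_gap e \<le> e * loss_variance K w lv / 2 + e * mix_gap e / 3"
proof (cases "e < 3")
  case True
  define q where "q = 2 * (1 - e / 3)"
  have q: "0 < q" using True unfolding q_def by simp
  define S where "S = (\<Sum>k<K. w k * exp (e * (h - lv k)))"
  have "S \<le> (\<Sum>k<K. w k * (1 + e * (h - lv k) + (e * (h - lv k))\<^sup>2 / q))"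
    unfolding S_def q_def
  proof (intro sum_mono mult_left_mono)
    fix k assume "k \<in> {..<K}"
    then have "e * (h - lv k) \<le> e * 1"
      using hedge_loss_le_one losses_unit[of k] e by (intro mult_left_mono) auto
    then show "exp (e * (h - lv k)) \<le> 1 + e * (h - lv k) + (e * (h - lv k))\<^sup>2 / (2 * (1 - e / 3))"
      using e True by (intro exp_le_Bernstein) auto
  qed (use weights_nonneg in auto)
  also have "\<dots> = (\<Sum>k<K. w k * (1 + e * (h - lv k)) + e\<^sup>2 / q * (w k * (lv k - h)\<^sup>2))"
    using q by (intro sum.cong) (auto simp: field_simps power2_eq_square)
  also have "\<dots> = 1 + e\<^sup>2 / q * loss_variance K w lv"
    by (simp add: loss_variance_def sum_distrib_left sum.distrib sum_weights_linear)
  finally have "ln S \<le> e\<^sup>2 / q * loss_variance K w lv"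
    using ln_le_minus_one[of S] one_le_sum_exp_centred[of e] unfolding S_def by linarith
  then have "ln S / e \<le> e\<^sup>2 / q * loss_variance K w lv / e"
    using e by (intro divide_right_mono) auto
  then have "mix_gap e \<le> e * loss_variance K w lv / q"
    using mix_gap_eq[of e] e unfolding S_def by (simp add: power2_eq_square)
  then have "mix_gap e * q \<le> e * loss_variance K w lv"
    using q by (simp add: pos_le_divide_eq)
  then show ?thesis unfolding q_def by (simp add: field_simps)
next
  case False
  have "1 * mix_gap e \<le> e / 3 * mix_gap e"
    using False mix_gap_nonneg[OF e] by (intro mult_right_mono) auto
  moreover have "0 \<le> e * loss_variance K w lv / 2"
    using e loss_variance_nonneg by simp
  ultimately show ?thesis by simp
qed

end

lemma cumL_0: "cumL l 0 = (\<lambda>k. 0)"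
  by (simp add: cumL_def fun_eq_iff)

lemma cumL_Suc: "cumL l (Suc n) k = cumL l n k + l (Suc n) k"
  by (simp add: cumL_def)

lemma sum_exp_gt_zero: "1 \<le> K \<Longrightarrow> 0 < (\<Sum>k<(K::nat). exp (f k :: real))"
  by (intro sum_pos) (auto simp: lessThan_empty_iff)

lemma exp_weights_nonneg: "0 \<le> exp_weights K eta Lv k"
  unfolding exp_weights_def Let_def by (auto intro!: divide_nonneg_nonneg sum_nonneg)

lemma sum_exp_weights:
  assumes K: "1 \<le> K"
  shows "(\<Sum>k<K. exp_weights K eta Lv k) = 1"
proof (cases "eta = PInfty")
  case True
  define m where "m = Min (Lv ` {..<K})"
  define A where "A = {j\<in>{..<K}. Lv j = m}"
  have "m \<in> Lv ` {..<K}"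
    unfolding m_def using K by (intro Min_in) (auto simp: lessThan_empty_iff)
  then have "card A > 0"
    unfolding A_def by (auto simp: card_gt_0_iff)
  have "(\<Sum>k<K. exp_weights K eta Lv k) = (\<Sum>k<K. if Lv k = m then 1 / real (card A) else 0)"
    unfolding exp_weights_def A_def m_def using True by (simp add: Let_def)
  also have "\<dots> = (\<Sum>k\<in>A. 1 / real (card A))"
    using sum.inter_filter[of "{..<K}" "\<lambda>k. 1 / real (card A)" "\<lambda>k. Lv k = m"]
    by (simp only: A_def[symmetric] finite_lessThan)
  also have "\<dots> = 1"
    using \<open>card A > 0\<close> by simp
  finally show ?thesis .
next
  case False
  then show ?thesis
    unfolding exp_weights_def
    using sum_exp_gt_zero[OF K, of "\<lambda>j. - real_of_ereal eta * Lv j"]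
    by (simp add: sum_divide_distrib[symmetric])
qed

text \<open>The mix losses of exponential weights are the increments of this potential.\<close>
definition potential :: "nat \<Rightarrow> ereal \<Rightarrow> (nat \<Rightarrow> real) \<Rightarrow> real" where
  "potential K eta Lv = (if eta = PInfty then Min (Lv ` {..<K})
     else - (1 / real_of_ereal eta) * ln ((\<Sum>k<K. exp (- real_of_ereal eta * Lv k)) / real K))"

lemma potential_zero: "1 \<le> K \<Longrightarrow> potential K eta (\<lambda>k. 0) = 0"
  unfolding potential_def by (auto simp: lessThan_empty_iff image_constant_conv)

lemma potential_PInfty_le:
  assumes K: "1 \<le> K" and e: "0 < e"
  shows "potential K PInfty Lv \<le> potential K (ereal e) Lv"
proof -
  define m where "m = Min (Lv ` {..<K})"
  have "(\<Sum>k<K. exp (- e * Lv k)) \<le> (\<Sum>k<K. exp (- e * m))"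
    unfolding m_def using e by (intro sum_mono) auto
  then have "(\<Sum>k<K. exp (- e * Lv k)) / real K \<le> exp (- e * m)"
    using K by (simp add: field_simps)
  then have "ln ((\<Sum>k<K. exp (- e * Lv k)) / real K) \<le> - e * m"
    using sum_exp_gt_zero[OF K, of "\<lambda>k. - e * Lv k"] K by (intro ln_le_of_le_exp) auto
  then show ?thesis
    unfolding potential_def m_def using e by (simp add: field_simps)
qed

text \<open>For p = e'/e \<le> 1, convexity bounds each exp(-e' L) = exp(p (-e L)) by a chord
  through the point ln(S/K), where the average of the exp(-e L) is attained.\<close>
lemma potential_ereal_antimono:
  assumes K: "1 \<le> K" and e: "0 < e'" "e' \<le> e"
  shows "potential K (ereal e) Lv \<le> potential K (ereal e') Lv"
proof -
  define p where "p = e' / e"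
  have p: "0 < p" "p \<le> 1" using e unfolding p_def by auto
  define S where "S = (\<Sum>k<K. exp (- e * Lv k))"
  have S: "0 < S" unfolding S_def by (rule sum_exp_gt_zero[OF K])
  define m where "m = ln (S / real K)"
  have exp_m: "exp m = S / K" unfolding m_def using S K by simp
  have "(\<Sum>k<K. exp (- e' * Lv k)) \<le> (\<Sum>k<K. exp (p * m) * (1 + p * (exp (- e * Lv k - m) - 1)))"
  proof (intro sum_mono)
    fix k
    have "exp (- e' * Lv k) = exp (p * m) * exp (p * (- e * Lv k - m))"
      using e by (simp add: p_def exp_add[symmetric] field_simps)
    also have "\<dots> \<le> exp (p * m) * (1 + p * (exp (- e * Lv k - m) - 1))"
      using p by (intro mult_left_mono exp_mult_le_chord) auto
    finally show "exp (- e' * Lv k) \<le> exp (p * m) * (1 + p * (exp (- e * Lv k - m) - 1))" .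
  qed
  also have "\<dots> = exp (p * m) * (real K * (1 - p) + p * S / exp m)"
    unfolding S_def
    by (simp add: sum_distrib_left sum.distrib sum_subtractf exp_diff algebra_simps sum_divide_distrib)
  also have "\<dots> = exp (p * m) * real K"
    using K S by (simp add: exp_m field_simps)
  finally have "(\<Sum>k<K. exp (- e' * Lv k)) / real K \<le> exp (p * m)"
    using K by (simp add: field_simps)
  then have "ln ((\<Sum>k<K. exp (- e' * Lv k)) / real K) \<le> p * m"
    using sum_exp_gt_zero[OF K, of "\<lambda>k. - e' * Lv k"] K by (intro ln_le_of_le_exp) auto
  then have "- (1 / e') * (p * m) \<le> - (1 / e') * ln ((\<Sum>k<K. exp (- e' * Lv k)) / real K)"
    using e by (intro mult_left_mono_neg) auto
  moreover have "- (1 / e') * (p * m) = - (1 / e) * m"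
    using e unfolding p_def by simp
  ultimately show ?thesis
    unfolding potential_def m_def S_def by simp
qed

lemma potential_antimono:
  assumes "1 \<le> K" "0 < eta'" "eta' \<le> eta"
  shows "potential K eta Lv \<le> potential K eta' Lv"
  using assms potential_ereal_antimono potential_PInfty_le
  by (cases eta; cases eta') auto

lemma potential_le_Min_add:
  assumes K: "1 \<le> K" and e: "0 < e"
  shows "potential K (ereal e) Lv \<le> Min (Lv ` {..<K}) + ln (real K) / e"
proof -
  have "Min (Lv ` {..<K}) \<in> Lv ` {..<K}"
    using K by (intro Min_in) (auto simp: lessThan_empty_iff)
  then obtain j where j: "j < K" "Lv j = Min (Lv ` {..<K})"
    by auto
  have "exp (- e * Lv j) / real K \<le> (\<Sum>k<K. exp (- e * Lv k)) / real K"
    using j by (intro divide_right_mono member_le_sum) auto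
  then have "ln (exp (- e * Lv j) / real K) \<le> ln ((\<Sum>k<K. exp (- e * Lv k)) / real K)"
    using K sum_exp_gt_zero[OF K, of "\<lambda>k. - e * Lv k"] by (subst ln_le_cancel_iff) auto
  moreover have "ln (exp (- e * Lv j) / real K) = - e * Lv j - ln (real K)"
    using K by (simp add: ln_div)
  ultimately have "- (1 / e) * ln ((\<Sum>k<K. exp (- e * Lv k)) / real K)
      \<le> - (1 / e) * (- e * Lv j - ln (real K))"
    using e by (intro mult_left_mono_neg) auto
  then have "potential K (ereal e) Lv \<le> - (1 / e) * (- e * Lv j - ln (real K))"
    unfolding potential_def by simp
  also have "\<dots> = Lv j + ln (real K) / e"
    using e by (simp add: field_simps)
  finally show ?thesis using j by simp
qed

lemma mix_loss_exp_weights: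
  assumes K: "1 \<le> K"
  shows "mix_loss K l (Suc n) eta (exp_weights K eta (cumL l n))
       = potential K eta (cumL l (Suc n)) - potential K eta (cumL l n)"
proof (cases "eta = PInfty")
  case True
  then show ?thesis unfolding mix_loss_def potential_def Lstar_def by simp
next
  case False
  define e where "e = real_of_ereal eta"
  define S0 where "S0 = (\<Sum>j<K. exp (- e * cumL l n j))"
  define S1 where "S1 = (\<Sum>j<K. exp (- e * cumL l (Suc n) j))"
  have S0: "0 < S0" unfolding S0_def by (rule sum_exp_gt_zero[OF K])
  have S1: "0 < S1" unfolding S1_def by (rule sum_exp_gt_zero[OF K])
  have "(\<Sum>k<K. exp_weights K eta (cumL l n) k * exp (- e * l (Suc n) k))
      = (\<Sum>k<K. exp (- e * cumL l (Suc n) k) / S0)"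
    using False
    by (intro sum.cong) (auto simp: exp_weights_def e_def S0_def cumL_Suc exp_add[symmetric] algebra_simps)
  also have "\<dots> = S1 / S0"
    unfolding S1_def by (simp add: sum_divide_distrib)
  finally have "mix_loss K l (Suc n) eta (exp_weights K eta (cumL l n)) = - (1 / e) * ln (S1 / S0)"
    unfolding mix_loss_def e_def using False by simp
  moreover have "ln (S1 / S0) = ln (S1 / real K) - ln (S0 / real K)"
    using S0 S1 K by (simp add: ln_div)
  moreover have "potential K eta (cumL l n) = - (1 / e) * ln (S0 / real K)"
    "potential K eta (cumL l (Suc n)) = - (1 / e) * ln (S1 / real K)"
    unfolding potential_def S0_def S1_def e_def using False by simp_all
  ultimately show ?thesis by (simp add: algebra_simps)
qed

lemma Min_le_Min_add_nonneg:
  fixes K :: nat and Lv lv :: "nat \<Rightarrow> real"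
  assumes K: "1 \<le> K" and lv: "\<And>k. k < K \<Longrightarrow> 0 \<le> lv k"
  shows "Min (Lv ` {..<K}) \<le> Min ((\<lambda>k. Lv k + lv k) ` {..<K})"
proof (rule Min.boundedI)
  fix y assume "y \<in> (\<lambda>k. Lv k + lv k) ` {..<K}"
  then obtain k where "k < K" "y = Lv k + lv k" by auto
  moreover have "Min (Lv ` {..<K}) \<le> Lv k"
    using \<open>k < K\<close> by (intro Min_le) auto
  ultimately show "Min (Lv ` {..<K}) \<le> y"
    using lv[OF \<open>k < K\<close>] by linarith
qed (use K in \<open>auto simp: lessThan_empty_iff\<close>)

text \<open>With eta = \<infinity> all weight sits on current leaders, each of which suffers at least
  the increase of the leading cumulative loss.\<close>
lemma Min_add_diff_le_hedge_loss_PInfty: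
  assumes K: "1 \<le> K"
  shows "Min ((\<lambda>k. Lv k + lv k) ` {..<K}) - Min (Lv ` {..<K})
       \<le> hedge_loss K (exp_weights K PInfty Lv) lv"
proof -
  define w where "w = exp_weights K PInfty Lv"
  define d where "d = Min ((\<lambda>k. Lv k + lv k) ` {..<K}) - Min (Lv ` {..<K})"
  have "w k * d \<le> w k * lv k" if "k < K" for k
  proof (cases "Lv k = Min (Lv ` {..<K})")
    case True
    have "Min ((\<lambda>k. Lv k + lv k) ` {..<K}) \<le> Lv k + lv k"
      using that by (intro Min_le) auto
    then show ?thesis
      unfolding d_def using True exp_weights_nonneg by (intro mult_left_mono) (auto simp: w_def)
  next
    case False
    then show ?thesis by (simp add: w_def exp_weights_def)
  qed
  then have "(\<Sum>k<K. w k) * d \<le> hedge_loss K w lv"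
    unfolding hedge_loss_def sum_distrib_right by (intro sum_mono) auto
  then show ?thesis
    unfolding w_def d_def using sum_exp_weights[OF K] by simp
qed

locale adahedge =
  fixes K T :: nat and l :: "nat \<Rightarrow> nat \<Rightarrow> real"
  assumes K: "1 \<le> K"
    and losses_unit: "\<And>t k. t \<in> {1..T} \<Longrightarrow> k < K \<Longrightarrow> 0 \<le> l t k \<and> l t k \<le> 1"
begin

text \<open>Round Suc n uses the learning rate eta n and has mixability gap gap n.\<close>
abbreviation Delta :: "nat \<Rightarrow> real" where
  "Delta n \<equiv> ah_Delta K l n"

abbreviation eta :: "nat \<Rightarrow> ereal" where
  "eta n \<equiv> ah_eta K (Delta n)"

abbreviation gap :: "nat \<Rightarrow> real" where
  "gap n \<equiv> ah_gap K l (Suc n) (Delta n)"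

abbreviation mix :: "nat \<Rightarrow> real" where
  "mix n \<equiv> mix_loss K l (Suc n) (eta n) (ah_weights K l (Suc n))"

abbreviation var :: "nat \<Rightarrow> real" where
  "var n \<equiv> loss_variance K (ah_weights K l (Suc n)) (l (Suc n))"

lemma ah_weights_Suc: "ah_weights K l (Suc n) = exp_weights K (eta n) (cumL l n)"
  unfolding ah_weights_def by simp

lemma gap_eq: "gap n = ah_h K l (Suc n) - mix n"
  by (simp add: ah_gap_def ah_h_def ah_weights_Suc Let_def)

lemma ah_var_Suc: "ah_var K l (Suc n) = ah_var K l n + var n"
  unfolding ah_var_def loss_variance_def ah_h_def by simp

lemma losses_unit_Suc: "Suc n \<le> T \<Longrightarrow> k < K \<Longrightarrow> 0 \<le> l (Suc n) k \<and> l (Suc n) k \<le> 1"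
  using losses_unit by simp

lemma loss_round_Suc: "Suc n \<le> T \<Longrightarrow> loss_round K (ah_weights K l (Suc n)) (l (Suc n))"
  unfolding ah_weights_Suc
  using exp_weights_nonneg sum_exp_weights[OF K] losses_unit_Suc by unfold_locales auto

lemma gap_PInfty_bounds:
  assumes n: "Suc n \<le> T" and D: "Delta n = 0"
  shows "0 \<le> gap n" "gap n \<le> 1" "K = 1 \<Longrightarrow> gap n = 0"
proof -
  interpret loss_round K "ah_weights K l (Suc n)" "l (Suc n)"
    by (rule loss_round_Suc[OF n])
  have gap: "gap n = h - (Min ((\<lambda>k. cumL l n k + l (Suc n) k) ` {..<K}) - Min (cumL l n ` {..<K}))"
    unfolding gap_eq ah_h_def mix_loss_def Lstar_def using D
    by (simp add: ah_eta_def cumL_Suc)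
  show "0 \<le> gap n"
    unfolding gap ah_weights_Suc using D Min_add_diff_le_hedge_loss_PInfty[OF K]
    by (simp add: ah_eta_def)
  have "Min (cumL l n ` {..<K}) \<le> Min ((\<lambda>k. cumL l n k + l (Suc n) k) ` {..<K})"
    using losses_unit_Suc n by (intro Min_le_Min_add_nonneg[OF K]) auto
  then show "gap n \<le> 1"
    unfolding gap using hedge_loss_le_one by linarith
  assume "K = 1"
  then show "gap n = 0"
    unfolding gap hedge_loss_def using sum_weights by (simp add: lessThan_Suc)
qed

lemma gap_finite_bounds:
  assumes n: "Suc n \<le> T" and D: "0 < Delta n" and lnK: "0 < ln (real K)"
  shows "0 \<le> gap n" "gap n \<le> 1" "Delta n * gap n \<le> ln (real K) / 2 * var n + ln (real K) / 3 * gap n"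
proof -
  interpret loss_round K "ah_weights K l (Suc n)" "l (Suc n)"
    by (rule loss_round_Suc[OF n])
  define e where "e = ln (real K) / Delta n"
  have e: "0 < e" unfolding e_def using lnK D by simp
  have gap: "gap n = mix_gap e"
    unfolding gap_eq ah_h_def mix_loss_def mix_gap_def e_def using D by (simp add: ah_eta_def)
  show "0 \<le> gap n" "gap n \<le> 1"
    unfolding gap using mix_gap_nonneg[OF e] mix_gap_le_one[OF e] by auto
  have "Delta n * gap n = ln (real K) / e * mix_gap e"
    unfolding gap e_def using D lnK by simp
  also have "\<dots> \<le> ln (real K) / e * (e * var n / 2 + e * mix_gap e / 3)"
    using mix_gap_Bernstein[OF e] e lnK by (intro mult_left_mono) auto
  also have "\<dots> = ln (real K) / 2 * var n + ln (real K) / 3 * gap n"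
    unfolding gap using e by (simp add: field_simps)
  finally show "Delta n * gap n \<le> ln (real K) / 2 * var n + ln (real K) / 3 * gap n" .
qed

text \<open>For K = 1 the gap vanishes even at eta = \<infinity>; this keeps Delta at 0, so a positive
  Delta always comes with ln K > 0 and a finite positive learning rate.\<close>
lemma Delta_invariant: "n \<le> T \<Longrightarrow> 0 \<le> Delta n \<and> (Delta n \<noteq> 0 \<longrightarrow> 2 \<le> K)"
proof (induction n)
  case 0
  then show ?case by simp
next
  case (Suc n)
  then have IH: "0 \<le> Delta n" "Delta n \<noteq> 0 \<longrightarrow> 2 \<le> K" by auto
  show ?case
  proof (cases "Delta n = 0")
    case True
    then show ?thesis using gap_PInfty_bounds[OF Suc.prems True] K by fastforce
  next
    case False
    then show ?thesis using gap_finite_bounds[OF Suc.prems] IH by simp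
  qed
qed

lemma gap_bounds:
  assumes n: "Suc n \<le> T"
  shows "0 \<le> gap n" "gap n \<le> 1"
    "Delta n * gap n \<le> ln (real K) / 2 * var n + ln (real K) / 3 * gap n"
proof -
  interpret loss_round K "ah_weights K l (Suc n)" "l (Suc n)"
    by (rule loss_round_Suc[OF n])
  have D: "0 \<le> Delta n" "Delta n \<noteq> 0 \<longrightarrow> 2 \<le> K"
    using Delta_invariant[of n] n by auto
  have "0 \<le> gap n \<and> gap n \<le> 1
      \<and> Delta n * gap n \<le> ln (real K) / 2 * var n + ln (real K) / 3 * gap n"
  proof (cases "Delta n = 0")
    case True
    then show ?thesis
      using gap_PInfty_bounds[OF n True] loss_variance_nonneg K by simp
  next
    case False
    then show ?thesis using gap_finite_bounds[OF n] D by simp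
  qed
  then show "0 \<le> gap n" "gap n \<le> 1"
    "Delta n * gap n \<le> ln (real K) / 2 * var n + ln (real K) / 3 * gap n"
    by auto
qed

lemma Delta_mono: "m \<le> n \<Longrightarrow> n \<le> T \<Longrightarrow> Delta m \<le> Delta n"
proof (induction n rule: dec_induct)
  case (step n)
  then show ?case using gap_bounds(1)[of n] by simp
qed simp

lemma eta_pos: "n \<le> T \<Longrightarrow> 0 < eta n"
  using Delta_invariant[of n] K by (cases "Delta n = 0") (auto simp: ah_eta_def)

lemma eta_antimono:
  assumes n: "Suc n \<le> T"
  shows "eta (Suc n) \<le> eta n"
proof (cases "Delta n = 0")
  case False
  then have D: "0 < Delta n" "Delta n \<le> Delta (Suc n)"
    using Delta_invariant[of n] Delta_mono[of n "Suc n"] n by auto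
  then have "ln (real K) / Delta (Suc n) \<le> ln (real K) / Delta n"
    using K by (intro divide_left_mono) auto
  then show ?thesis using D False by (simp add: ah_eta_def)
qed (simp add: ah_eta_def)

lemma Delta_sq_le:
  "n \<le> T \<Longrightarrow> (Delta n)\<^sup>2 \<le> ln (real K) * ah_var K l n + (2/3 * ln (real K) + 1) * Delta n"
proof (induction n)
  case 0
  then show ?case by (simp add: ah_var_def)
next
  case (Suc n)
  have "(gap n)\<^sup>2 \<le> gap n"
    using gap_bounds(1,2)[OF Suc.prems] by (simp add: power2_eq_square mult_left_le)
  then have "(Delta (Suc n))\<^sup>2 \<le> (Delta n)\<^sup>2 + 2 * (Delta n * gap n) + gap n"
    by (simp add: power2_eq_square algebra_simps)
  then show ?case
    using Suc gap_bounds(3)[OF Suc.prems] by (simp add: ah_var_Suc algebra_simps)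
qed

lemma Delta_le:
  assumes "n \<le> T"
  shows "Delta n \<le> sqrt (ah_var K l n * ln (real K)) + 2/3 * ln (real K) + 1"
proof -
  have "0 \<le> ah_var K l n"
    unfolding ah_var_def using exp_weights_nonneg
    by (intro sum_nonneg mult_nonneg_nonneg) (auto simp: ah_weights_def)
  then show ?thesis
    using le_sqrt_add_of_quadratic[OF _ _ Delta_sq_le[OF assms]] K
    by (simp add: mult.commute add.assoc)
qed

lemma sum_ah_h_eq: "(\<Sum>t\<in>{1..n}. ah_h K l t) = (\<Sum>t<n. mix t) + Delta n"
proof (induction n)
  case (Suc n)
  have "{1..Suc n} = insert (Suc n) {1..n}" by auto
  then show ?case using Suc by (simp add: gap_eq)
qed simp

lemma mix_eq_potential_diff:
  "mix n = potential K (eta n) (cumL l (Suc n)) - potential K (eta n) (cumL l n)"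
  unfolding ah_weights_Suc by (rule mix_loss_exp_weights[OF K])

text \<open>The mix losses telescope up to the drift of the potential as eta decreases, and that
  drift has the right sign.\<close>
lemma sum_mix_le_potential:
  "Suc m \<le> T \<Longrightarrow> (\<Sum>t<Suc m. mix t) \<le> potential K (eta m) (cumL l (Suc m))"
proof (induction m)
  case 0
  then show ?case
    using mix_eq_potential_diff[of 0] potential_zero[OF K] by (simp add: cumL_0)
next
  case (Suc m)
  have "potential K (eta m) (cumL l (Suc m)) \<le> potential K (eta (Suc m)) (cumL l (Suc m))"
    using Suc.prems eta_pos[of "Suc m"] eta_antimono[of m] by (intro potential_antimono[OF K]) auto
  then show ?case
    using Suc by (simp add: mix_eq_potential_diff)
qed

lemma potential_le_Lstar_add_Delta:
  assumes "n \<le> T"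
  shows "potential K (eta n) (cumL l m) \<le> Lstar K l m + Delta n"
proof (cases "Delta n = 0")
  case True
  then show ?thesis by (simp add: ah_eta_def potential_def Lstar_def)
next
  case False
  then have "0 < Delta n" "0 < ln (real K)"
    using Delta_invariant[OF assms] by auto
  then show ?thesis
    using potential_le_Min_add[OF K, of "ln (real K) / Delta n" "cumL l m"] False
    by (simp add: ah_eta_def Lstar_def)
qed

lemma regret_le_two_Delta:
  assumes "1 \<le> T"
  shows "ah_regret K l T \<le> 2 * Delta T"
proof -
  obtain m where m: "T = Suc m" using assms by (cases T) auto
  have "ah_regret K l T = (\<Sum>t<T. mix t) + Delta T - Lstar K l T"
    unfolding ah_regret_def sum_ah_h_eq ..
  also have "\<dots> \<le> potential K (eta m) (cumL l T) + Delta T - Lstar K l T"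
    using sum_mix_le_potential[of m] m by simp
  also have "\<dots> \<le> Delta m + Delta T"
    using potential_le_Lstar_add_Delta[of m T] m by simp
  also have "\<dots> \<le> 2 * Delta T"
    using Delta_mono[of m T] m by simp
  finally show ?thesis .
qed

end

theorem theorem6:
  fixes K T :: nat and l :: "nat \<Rightarrow> nat \<Rightarrow> real"
  assumes "K \<ge> 1" and "T \<ge> 1"
    and "\<And>t k. t \<in> {1..T} \<Longrightarrow> k < K \<Longrightarrow> 0 \<le> l t k \<and> l t k \<le> 1"
  shows "ah_regret K l T \<le> 2 * sqrt (ah_var K l T * ln (real K)) + 4/3 * ln (real K) + 2"
proof -
  interpret adahedge K T l
    using assms by unfold_locales auto
  have "ah_regret K l T \<le> 2 * Delta T"
    by (rule regret_le_two_Delta[OF assms(2)])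
  also have "\<dots> \<le> 2 * (sqrt (ah_var K l T * ln (real K)) + 2/3 * ln (real K) + 1)"
    using Delta_le[of T] by simp
  finally show ?thesis by simp
qed

end
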